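(* Let $\mathbb{R}^{3,1}$ denote $\mathbb{R}^4$ with the inner product $\langle\langle X,Y\rangle\rangle = X_1Y_1+X_2Y_2+X_3Y_3-X_4Y_4$. Let $S\colon \mathbb{R}^2\to\mathbb{R}^{3,1}$ be a regular smooth net and let $P$ be an attached tangent isotropic hyperplane congruence of $S$ (definitions in the context). Let $N(u,v)$ be a normal vector (with respect to $\langle\langle\cdot,\cdot\rangle\rangle$) to $P(u,v)$ depending smoothly on $(u,v)$, and set $$L_P:=\langle\langle S_{uu},N\rangle\rangle=-\langle\langle S_u,N_u\rangle\rangle,\quad M_P:=\langle\langle S_{uv},N\rangle\rangle=-\langle\langle S_u,N_v\rangle\rangle=-\langle\langle S_v,N_u\rangle\rangle,\quad N_P:=\langle\langle S_{vv},N\rangle\rangle=-\langle\langle S_v,N_v\rangle\rangle .$$ Then two non-parallel tangent vectors $A=a_1S_u+a_2S_v$ and $B=b_1S_u+b_2S_v$ at a surface point $S(u,v)$ are L-conjugate with respect to $P$ if and only if $$L_Pa_1b_1+M_P(a_1b_2+a_2b_1)+N_Pa_2b_2=0 .$$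
   Context: An isotropic hyperplane ($\gamma$-hyperplane) in $\mathbb{R}^{3,1}$ is a hyperplane of the form $\{(x,x_4)\in\mathbb{R}^3\times\mathbb{R}: x_4=\langle n,x\rangle+h\}$ with $n\in\mathbb{R}^3$ a Euclidean unit vector and $h\in\mathbb{R}$; its normal vector $(n,1)$ is isotropic. A regular smooth net is a smooth map $S\colon\mathbb{R}^2\to\mathbb{R}^{3,1}$ with $S_u(u,v)$ not parallel to $S_v(u,v)$ at every $(u,v)$. An attached tangent isotropic hyperplane congruence is a smooth map $P$ assigning to each $(u,v)$ an isotropic hyperplane $P(u,v)$ such that $S(u,v)\in P(u,v)$ and $S_u(u,v),S_v(u,v)$ are parallel to $P(u,v)$. A reparametrization of $(S,P)$ is $(S\circ D,P\circ D)$ for a diffeomorphism $D\colon\mathbb{R}^2\to\mathbb{R}^2$. Two non-parallel tangent vectors $T_1,T_2$ at a surface point $X=S(u,v)$ are called L-conjugate with respect to $P$ if there is a reparametrization $(\bar S,\bar P)$ of $(S,P)$ such that, at the parameter corresponding to $X$, $\bar S_u\parallel T_1$, $\bar S_v\parallel T_2$, and $\bar S_u,\bar S_v,\bar S_{uv}$ are all parallel to the hyperplane $\bar P$. *)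

theory Defs
  imports "HOL-Analysis.Analysis"
begin

definition mink :: "real^4 \<Rightarrow> real^4 \<Rightarrow> real" where
  "mink X Y = X$1 * Y$1 + X$2 * Y$2 + X$3 * Y$3 - X$4 * Y$4"

text \<open>An isotropic hyperplane is encoded by its data (n,h), n a Euclidean unit vector of R^3.\<close>
type_synonym gamma_plane = "(real^3) \<times> real"

definition valid_plane :: "gamma_plane \<Rightarrow> bool" where
  "valid_plane P = (norm (fst P) = 1)"

definition plane_points :: "gamma_plane \<Rightarrow> (real^4) set" where
  "plane_points P = {X. X$4 = (fst P)$1 * X$1 + (fst P)$2 * X$2 + (fst P)$3 * X$3 + snd P}"

definition par_plane :: "gamma_plane \<Rightarrow> real^4 \<Rightarrow> bool" where
  "par_plane P Y = (Y$4 = (fst P)$1 * Y$1 + (fst P)$2 * Y$2 + (fst P)$3 * Y$3)"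

definition vpar :: "'a::real_vector \<Rightarrow> 'a \<Rightarrow> bool" where
  "vpar X Y = (X \<noteq> 0 \<and> Y \<noteq> 0 \<and> (\<exists>c. X = c *\<^sub>R Y))"

definition nonpar :: "'a::real_vector \<Rightarrow> 'a \<Rightarrow> bool" where
  "nonpar X Y = ((\<forall>c. X \<noteq> c *\<^sub>R Y) \<and> (\<forall>c. Y \<noteq> c *\<^sub>R X))"

fun Ck :: "nat \<Rightarrow> (real \<times> real \<Rightarrow> 'a::real_normed_vector) \<Rightarrow> bool" where
  "Ck 0 f = continuous_on UNIV f"
| "Ck (Suc k) f = (\<exists>fu fv. (\<forall>p. (f has_derivative (\<lambda>(du, dv). du *\<^sub>R fu p + dv *\<^sub>R fv p)) (at p))
                        \<and> Ck k fu \<and> Ck k fv)"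

definition smooth2 :: "(real \<times> real \<Rightarrow> 'a::real_normed_vector) \<Rightarrow> bool" where
  "smooth2 f = (\<forall>k. Ck k f)"

definition pu :: "(real \<times> real \<Rightarrow> 'a::real_normed_vector) \<Rightarrow> real \<times> real \<Rightarrow> 'a" where
  "pu f p = vector_derivative (\<lambda>t. f (t, snd p)) (at (fst p))"

definition pv :: "(real \<times> real \<Rightarrow> 'a::real_normed_vector) \<Rightarrow> real \<times> real \<Rightarrow> 'a" where
  "pv f p = vector_derivative (\<lambda>t. f (fst p, t)) (at (snd p))"

definition regular_net :: "(real \<times> real \<Rightarrow> real^4) \<Rightarrow> bool" where
  "regular_net S = (smooth2 S \<and> (\<forall>p. nonpar (pu S p) (pv S p)))"

definition tangent_congruence :: "(real \<times> real \<Rightarrow> real^4) \<Rightarrow> (real \<times> real \<Rightarrow> gamma_plane) \<Rightarrow> bool" where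
  "tangent_congruence S P = (smooth2 P \<and> (\<forall>p. valid_plane (P p) \<and> S p \<in> plane_points (P p)
      \<and> par_plane (P p) (pu S p) \<and> par_plane (P p) (pv S p)))"

definition diffeo2 :: "(real \<times> real \<Rightarrow> real \<times> real) \<Rightarrow> bool" where
  "diffeo2 D = (bij D \<and> smooth2 D \<and> smooth2 (inv D))"

text \<open>L-conjugacy of tangent vectors T1, T2 at the surface point with parameter p.
  The reparametrized pair is (S o D, P o D), and the parameter corresponding to p is q with D q = p.\<close>
definition L_conjugate :: "(real \<times> real \<Rightarrow> real^4) \<Rightarrow> (real \<times> real \<Rightarrow> gamma_plane)
    \<Rightarrow> real \<times> real \<Rightarrow> real^4 \<Rightarrow> real^4 \<Rightarrow> bool" where
  "L_conjugate S P p T1 T2 = (nonpar T1 T2 \<and>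
     (\<exists>D q. diffeo2 D \<and> D q = p \<and>
        (let Sb = S \<circ> D; Pb = P \<circ> D in
           vpar (pu Sb q) T1 \<and> vpar (pv Sb q) T2 \<and>
           par_plane (Pb q) (pu Sb q) \<and> par_plane (Pb q) (pv Sb q) \<and>
           par_plane (Pb q) (pv (pu Sb) q))))"

definition normal_field :: "(real \<times> real \<Rightarrow> gamma_plane) \<Rightarrow> (real \<times> real \<Rightarrow> real^4) \<Rightarrow> bool" where
  "normal_field P N = (smooth2 N \<and> (\<forall>p. N p \<noteq> 0 \<and> (\<forall>Y. par_plane (P p) Y \<longrightarrow> mink (N p) Y = 0)))"

end

theory Submission
  imports Defs
begin

text \<open>
  Let D be a reparametrization. By the chain rule, (S o D)_u = D_u1 S_u + D_u2 S_v and
  (S o D)_v = D_v1 S_u + D_v2 S_v, while (S o D)_uv is a bilinear expression in D_u, D_v built from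
  the second partials of S, plus a tangent vector. Pairing with the normal N kills the tangent part,
  and by the symmetry of mixed partials what remains is the second fundamental form
  II_P(D_u, D_v) = L_P D_u1 D_v1 + M_P (D_u1 D_v2 + D_u2 D_v1) + N_P D_u2 D_v2.
  A vector is parallel to an isotropic hyperplane iff it is orthogonal to its normal, so (S o D)_uv is
  parallel to P exactly when II_P(D_u, D_v) = 0. If (S o D)_u, (S o D)_v are parallel to A, B then
  D_u, D_v are nonzero multiples of (a1, a2), (b1, b2), which gives one direction; for the other,
  the affine reparametrization with D_u = (a1, a2), D_v = (b1, b2) is a diffeomorphism because A, B
  are not parallel.
\<close>

section \<open>Partial derivatives in the plane\<close>

definition has_partials ::
    "(real \<times> real \<Rightarrow> 'a::real_normed_vector) \<Rightarrow> (real \<times> real \<Rightarrow> 'a) \<Rightarrow> (real \<times> real \<Rightarrow> 'a) \<Rightarrow> bool"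
  where "has_partials f fu fv \<longleftrightarrow>
    (\<forall>p. (f has_derivative (\<lambda>(du, dv). du *\<^sub>R fu p + dv *\<^sub>R fv p)) (at p))"

lemma has_derivative_partials:
  fixes f :: "real \<times> real \<Rightarrow> 'a::real_normed_vector"
  assumes "(f has_derivative f') (at (s, t))"
  shows "((\<lambda>x. f (x, t)) has_vector_derivative f' (1, 0)) (at s)"
    and "((\<lambda>y. f (s, y)) has_vector_derivative f' (0, 1)) (at t)"
proof -
  have lin: "linear f'"
    using assms has_derivative_linear by blast
  show "((\<lambda>x. f (x, t)) has_vector_derivative f' (1, 0)) (at s)"
    unfolding has_vector_derivative_def
    using diff_chain_at[OF has_derivative_Pair[OF has_derivative_ident has_derivative_const] assms,
        unfolded o_def]
    by (rule has_derivative_eq_rhs) (simp add: fun_eq_iff linear_scale[OF lin, symmetric])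
  show "((\<lambda>y. f (s, y)) has_vector_derivative f' (0, 1)) (at t)"
    unfolding has_vector_derivative_def
    using diff_chain_at[OF has_derivative_Pair[OF has_derivative_const has_derivative_ident] assms,
        unfolded o_def]
    by (rule has_derivative_eq_rhs) (simp add: fun_eq_iff linear_scale[OF lin, symmetric])
qed

lemma pu_pv_has_derivative:
  assumes "(f has_derivative f') (at x)"
  shows "pu f x = f' (1, 0)" and "pv f x = f' (0, 1)"
  using has_derivative_partials[of f f' "fst x" "snd x"] assms
  by (simp_all add: pu_def pv_def vector_derivative_at)

lemma has_partials_pu_pv:
  assumes "has_partials f fu fv"
  shows "pu f = fu" and "pv f = fv"
  using pu_pv_has_derivative assms by (fastforce simp: has_partials_def)+

lemma Ck_Suc_partials:
  assumes "Ck (Suc k) f"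
  shows "has_partials f (pu f) (pv f)" and "Ck k (pu f)" and "Ck k (pv f)"
proof -
  obtain fu fv where "has_partials f fu fv" "Ck k fu" "Ck k fv"
    using assms by (auto simp: has_partials_def)
  then show "has_partials f (pu f) (pv f)" "Ck k (pu f)" "Ck k (pv f)"
    by (simp_all add: has_partials_pu_pv)
qed

lemma Ck_SucI: "has_partials f fu fv \<Longrightarrow> Ck k fu \<Longrightarrow> Ck k fv \<Longrightarrow> Ck (Suc k) f"
  by (auto simp: has_partials_def)

lemma Ck_2_partials:
  assumes "Ck 2 f"
  shows "has_partials f (pu f) (pv f)"
    and "has_partials (pu f) (pu (pu f)) (pv (pu f))"
    and "has_partials (pv f) (pu (pv f)) (pv (pv f))"
    and "continuous_on UNIV (pv (pu f))" and "continuous_on UNIV (pu (pv f))"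
  using Ck_Suc_partials[of 1 f] Ck_Suc_partials[of 0 "pu f"] Ck_Suc_partials[of 0 "pv f"] assms
  by (simp_all add: numeral_2_eq_2)

lemma has_partials_const: "has_partials (\<lambda>_. c) (\<lambda>_. 0) (\<lambda>_. 0)"
  by (simp add: has_partials_def split_beta')

lemma has_partials_affine:
  "has_partials (\<lambda>w. fst w *\<^sub>R a + snd w *\<^sub>R b + c) (\<lambda>_. a) (\<lambda>_. b)"
  unfolding has_partials_def split_beta'
  by (auto intro!: derivative_eq_intros)

lemma has_partials_bounded_linear:
  assumes "bounded_linear l" and "has_partials f fu fv"
  shows "has_partials (\<lambda>x. l (f x)) (\<lambda>x. l (fu x)) (\<lambda>x. l (fv x))"
  unfolding has_partials_def
proof
  fix p
  show "((\<lambda>x. l (f x)) has_derivative (\<lambda>(du, dv). du *\<^sub>R l (fu p) + dv *\<^sub>R l (fv p))) (at p)"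
    using bounded_linear.has_derivative[OF assms(1) assms(2)[unfolded has_partials_def, rule_format]]
    by (rule has_derivative_eq_rhs)
      (simp add: fun_eq_iff bounded_linear.linear[OF assms(1)] linear_add linear_scale)
qed

lemma has_partials_add:
  assumes "has_partials f fu fv" and "has_partials g gu gv"
  shows "has_partials (\<lambda>x. f x + g x) (\<lambda>x. fu x + gu x) (\<lambda>x. fv x + gv x)"
  unfolding has_partials_def
proof
  fix p
  show "((\<lambda>x. f x + g x) has_derivative
      (\<lambda>(du, dv). du *\<^sub>R (fu p + gu p) + dv *\<^sub>R (fv p + gv p))) (at p)"
    using has_derivative_add[OF assms[unfolded has_partials_def, rule_format]]
    by (rule has_derivative_eq_rhs) (simp add: fun_eq_iff algebra_simps)
qed

lemma has_partials_scaleR: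
  assumes "has_partials g gu gv" and "has_partials f fu fv"
  shows "has_partials (\<lambda>x. g x *\<^sub>R f x)
    (\<lambda>x. g x *\<^sub>R fu x + gu x *\<^sub>R f x) (\<lambda>x. g x *\<^sub>R fv x + gv x *\<^sub>R f x)"
  unfolding has_partials_def
proof
  fix p
  show "((\<lambda>x. g x *\<^sub>R f x) has_derivative (\<lambda>(du, dv).
      du *\<^sub>R (g p *\<^sub>R fu p + gu p *\<^sub>R f p) + dv *\<^sub>R (g p *\<^sub>R fv p + gv p *\<^sub>R f p))) (at p)"
    using has_derivative_scaleR[OF assms[unfolded has_partials_def, rule_format]]
    by (rule has_derivative_eq_rhs) (simp add: fun_eq_iff algebra_simps)
qed

lemma has_partials_comp:
  assumes "has_partials f fu fv" and "has_partials D Du Dv"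
  shows "has_partials (\<lambda>x. f (D x))
    (\<lambda>x. fst (Du x) *\<^sub>R fu (D x) + snd (Du x) *\<^sub>R fv (D x))
    (\<lambda>x. fst (Dv x) *\<^sub>R fu (D x) + snd (Dv x) *\<^sub>R fv (D x))"
  unfolding has_partials_def
proof
  fix p
  show "((\<lambda>x. f (D x)) has_derivative (\<lambda>(du, dv).
      du *\<^sub>R (fst (Du p) *\<^sub>R fu (D p) + snd (Du p) *\<^sub>R fv (D p))
      + dv *\<^sub>R (fst (Dv p) *\<^sub>R fu (D p) + snd (Dv p) *\<^sub>R fv (D p)))) (at p)"
    using diff_chain_at[OF assms(2)[unfolded has_partials_def, rule_format]
        assms(1)[unfolded has_partials_def, rule_format], unfolded o_def]
    by (rule has_derivative_eq_rhs) (simp add: fun_eq_iff split_beta' algebra_simps)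
qed

section \<open>Symmetry of mixed partial derivatives\<close>

lemma has_partials_real_derivatives:
  fixes g :: "real \<times> real \<Rightarrow> real"
  assumes "has_partials g gu gv"
  shows "((\<lambda>x. g (x, t)) has_real_derivative gu (s, t)) (at s)"
    and "((\<lambda>y. g (s, y)) has_real_derivative gv (s, t)) (at t)"
  using has_derivative_partials[OF assms[unfolded has_partials_def, rule_format, of "(s, t)"]]
  by (simp_all add: has_real_derivative_iff_has_vector_derivative)

text \<open>The mean value theorem applied twice to the second difference
  g(x+h,y+h) - g(x+h,y) - g(x,y+h) + g(x,y), in each of the two orders of differentiation.\<close>
lemma mixed_partials_meet_nearby:
  fixes g :: "real \<times> real \<Rightarrow> real"
  assumes g: "has_partials g gu gv"
    and gu: "has_partials gu guu guv" and gv: "has_partials gv gvu gvv"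
    and "h > 0"
  shows "\<exists>w1 w2. dist w1 (x, y) < 2 * h \<and> dist w2 (x, y) < 2 * h \<and> guv w1 = gvu w2"
proof -
  have hx: "x < x + h" "y < y + h"
    using \<open>h > 0\<close> by auto
  obtain s1 where s1: "x < s1" "s1 < x + h"
    "(g (x + h, y + h) - g (x + h, y)) - (g (x, y + h) - g (x, y))
      = ((x + h) - x) * (gu (s1, y + h) - gu (s1, y))"
    using MVT2[OF hx(1), of "\<lambda>s. g (s, y + h) - g (s, y)" "\<lambda>s. gu (s, y + h) - gu (s, y)"]
      DERIV_diff[OF has_partials_real_derivatives(1)[OF g] has_partials_real_derivatives(1)[OF g]]
    by blast
  obtain t1 where t1: "y < t1" "t1 < y + h"
    "gu (s1, y + h) - gu (s1, y) = ((y + h) - y) * guv (s1, t1)"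
    using MVT2[OF hx(2), of "\<lambda>t. gu (s1, t)" "\<lambda>t. guv (s1, t)"]
      has_partials_real_derivatives(2)[OF gu] by blast
  obtain t2 where t2: "y < t2" "t2 < y + h"
    "(g (x + h, y + h) - g (x, y + h)) - (g (x + h, y) - g (x, y))
      = ((y + h) - y) * (gv (x + h, t2) - gv (x, t2))"
    using MVT2[OF hx(2), of "\<lambda>t. g (x + h, t) - g (x, t)" "\<lambda>t. gv (x + h, t) - gv (x, t)"]
      DERIV_diff[OF has_partials_real_derivatives(2)[OF g] has_partials_real_derivatives(2)[OF g]]
    by blast
  obtain s2 where s2: "x < s2" "s2 < x + h"
    "gv (x + h, t2) - gv (x, t2) = ((x + h) - x) * gvu (s2, t2)"
    using MVT2[OF hx(1), of "\<lambda>s. gv (s, t2)" "\<lambda>s. gvu (s, t2)"]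
      has_partials_real_derivatives(1)[OF gv] by blast
  have "h * (h * guv (s1, t1)) = h * (h * gvu (s2, t2))"
    using s1(3) t1(3) t2(3) s2(3) by (simp add: algebra_simps)
  then have "guv (s1, t1) = gvu (s2, t2)"
    using \<open>h > 0\<close> by simp
  moreover have "dist (a, b) (x, y) < 2 * h" if "x < a" "a < x + h" "y < b" "b < y + h" for a b
    using norm_Pair_le[of "a - x" "b - y"] that by (simp add: dist_norm)
  ultimately show ?thesis
    using s1 t1 s2 t2 by blast
qed

lemma real_mixed_partials_commute:
  fixes g :: "real \<times> real \<Rightarrow> real"
  assumes g: "has_partials g gu gv"
    and gu: "has_partials gu guu guv" and gv: "has_partials gv gvu gvv"
    and cont: "continuous_on UNIV guv" "continuous_on UNIV gvu"
  shows "guv z = gvu z"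
proof -
  have close: "\<bar>guv z - gvu z\<bar> < 2 * e" if "e > 0" for e
  proof -
    obtain d1 where "d1 > 0" and d1: "\<And>w. dist w z < d1 \<Longrightarrow> dist (guv w) (guv z) < e"
      using cont(1) \<open>e > 0\<close> by (metis continuous_on_iff UNIV_I)
    obtain d2 where "d2 > 0" and d2: "\<And>w. dist w z < d2 \<Longrightarrow> dist (gvu w) (gvu z) < e"
      using cont(2) \<open>e > 0\<close> by (metis continuous_on_iff UNIV_I)
    obtain w1 w2 where w: "dist w1 z < min d1 d2" "dist w2 z < min d1 d2" "guv w1 = gvu w2"
      using mixed_partials_meet_nearby[OF g gu gv, of "min d1 d2 / 2" "fst z" "snd z"]
        \<open>d1 > 0\<close> \<open>d2 > 0\<close> by auto
    then show ?thesis
      using d1[of w1] d2[of w2] by (simp add: dist_real_def)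
  qed
  show ?thesis
    using close[of "\<bar>guv z - gvu z\<bar> / 2"] by fastforce
qed

lemma Ck_2_mixed_partials_commute:
  fixes f :: "real \<times> real \<Rightarrow> 'a::euclidean_space"
  assumes "Ck 2 f"
  shows "pu (pv f) = pv (pu f)"
proof (rule ext, rule euclidean_eqI)
  fix z and b :: 'a
  note d = Ck_2_partials[OF assms]
  note inner_b = has_partials_bounded_linear[OF bounded_linear_inner_left[of b]]
  have "continuous_on UNIV (\<lambda>x. pv (pu f) x \<bullet> b)" "continuous_on UNIV (\<lambda>x. pu (pv f) x \<bullet> b)"
    using d(4,5) by (auto intro: continuous_on_inner continuous_on_const)
  then show "pu (pv f) z \<bullet> b = pv (pu f) z \<bullet> b"
    using real_mixed_partials_commute[OF inner_b[OF d(1)] inner_b[OF d(2)] inner_b[OF d(3)]]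
    by simp
qed

lemma Ck_2_partials_comp:
  fixes S :: "real \<times> real \<Rightarrow> 'a::real_normed_vector" and D :: "real \<times> real \<Rightarrow> real \<times> real"
  assumes S: "Ck 2 S" and D: "Ck 2 D"
  shows "pu (S \<circ> D) x = fst (pu D x) *\<^sub>R pu S (D x) + snd (pu D x) *\<^sub>R pv S (D x)"
      (is ?u)
    and "pv (S \<circ> D) x = fst (pv D x) *\<^sub>R pu S (D x) + snd (pv D x) *\<^sub>R pv S (D x)"
      (is ?v)
    and "pv (pu (S \<circ> D)) x = fst (pv (pu D) x) *\<^sub>R pu S (D x) + snd (pv (pu D) x) *\<^sub>R pv S (D x)
      + fst (pu D x) *\<^sub>R (fst (pv D x) *\<^sub>R pu (pu S) (D x) + snd (pv D x) *\<^sub>R pv (pu S) (D x))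
      + snd (pu D x) *\<^sub>R (fst (pv D x) *\<^sub>R pu (pv S) (D x) + snd (pv D x) *\<^sub>R pv (pv S) (D x))"
      (is ?uv)
proof -
  note S2 = Ck_2_partials[OF S] and D2 = Ck_2_partials[OF D]
  note comp = has_partials_pu_pv[OF has_partials_comp[OF S2(1) D2(1)]]
  show ?u and ?v
    unfolding comp_def by (simp_all add: comp)
  note uv = has_partials_pu_pv(2)[OF has_partials_add[OF
      has_partials_scaleR[OF has_partials_bounded_linear[OF bounded_linear_fst D2(2)]
        has_partials_comp[OF S2(2) D2(1)]]
      has_partials_scaleR[OF has_partials_bounded_linear[OF bounded_linear_snd D2(2)]
        has_partials_comp[OF S2(3) D2(1)]]]]
  show ?uv
    unfolding comp_def comp uv by (simp add: algebra_simps)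
qed

section \<open>Isotropic hyperplanes and the second fundamental form\<close>

lemma mink_add_left [simp]: "mink (X + Y) Z = mink X Z + mink Y Z"
  by (simp add: mink_def algebra_simps)

lemma mink_scaleR_left [simp]: "mink (c *\<^sub>R X) Z = c * mink X Z"
  by (simp add: mink_def algebra_simps)

lemma mink_commute: "mink X Y = mink Y X"
  by (simp add: mink_def algebra_simps)

lemma normal_field_par_plane_iff:
  assumes "normal_field P N"
  shows "par_plane (P p) Y \<longleftrightarrow> mink (N p) Y = 0"
proof
  show "par_plane (P p) Y \<Longrightarrow> mink (N p) Y = 0"
    using assms unfolding normal_field_def by blast
next
  assume orth: "mink (N p) Y = 0"
  obtain n h where P: "P p = (n, h)"
    by fastforce
  define Y1 :: "real^4" where "Y1 = (\<chi> i. if i = 1 then 1 else if i = 4 then n $ 1 else 0)"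
  define Y2 :: "real^4" where "Y2 = (\<chi> i. if i = 2 then 1 else if i = 4 then n $ 2 else 0)"
  define Y3 :: "real^4" where "Y3 = (\<chi> i. if i = 3 then 1 else if i = 4 then n $ 3 else 0)"
  have "par_plane (P p) Y1" "par_plane (P p) Y2" "par_plane (P p) Y3"
    by (simp_all add: par_plane_def P Y1_def Y2_def Y3_def)
  then have "mink (N p) Y1 = 0" "mink (N p) Y2 = 0" "mink (N p) Y3 = 0"
    using assms unfolding normal_field_def by blast+
  then have N: "N p $ 1 = N p $ 4 * n $ 1" "N p $ 2 = N p $ 4 * n $ 2" "N p $ 3 = N p $ 4 * n $ 3"
    by (simp_all add: mink_def Y1_def Y2_def Y3_def)
  have "N p \<noteq> 0"
    using assms unfolding normal_field_def by blast
  then have "N p $ 4 \<noteq> 0"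
    using N by (auto simp: vec_eq_iff forall_4)
  moreover have "N p $ 4 * (n $ 1 * Y $ 1 + n $ 2 * Y $ 2 + n $ 3 * Y $ 3 - Y $ 4) = 0"
    using orth N by (simp add: mink_def algebra_simps)
  ultimately show "par_plane (P p) Y"
    by (simp add: par_plane_def P)
qed

text \<open>The form L_P a1 b1 + M_P (a1 b2 + a2 b1) + N_P a2 b2, with n playing the role of N(u,v).\<close>
definition second_form :: "(real \<times> real \<Rightarrow> real^4) \<Rightarrow> real^4 \<Rightarrow> real \<times> real
    \<Rightarrow> real \<times> real \<Rightarrow> real \<times> real \<Rightarrow> real" where
  "second_form S n p a b = mink (pu (pu S) p) n * fst a * fst b
     + mink (pv (pu S) p) n * (fst a * snd b + snd a * fst b) + mink (pv (pv S) p) n * snd a * snd b"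

lemma second_form_scaleR:
  "second_form S n p (c *\<^sub>R a) (d *\<^sub>R b) = c * d * second_form S n p a b"
  by (simp add: second_form_def algebra_simps)

lemma mink_mixed_partial_comp:
  assumes "Ck 2 S" and "Ck 2 D"
    and "mink (pu S (D x)) n = 0" and "mink (pv S (D x)) n = 0"
  shows "mink (pv (pu (S \<circ> D)) x) n = second_form S n (D x) (pu D x) (pv D x)"
  using assms
  by (simp add: Ck_2_partials_comp Ck_2_mixed_partials_commute second_form_def algebra_simps)

lemma nonpar_nonzero: "nonpar X Y \<Longrightarrow> X \<noteq> 0 \<and> Y \<noteq> 0"
  unfolding nonpar_def by (metis scaleR_zero_left)

lemma nonpar_lincomb_eq_0:
  assumes "nonpar U V" and "x *\<^sub>R U + y *\<^sub>R V = 0"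
  shows "x = 0 \<and> y = 0"
proof (cases "x = 0")
  case True
  then show ?thesis
    using assms nonpar_nonzero by auto
next
  case False
  have "U = (1 / x) *\<^sub>R (x *\<^sub>R U)"
    using False by simp
  also have "x *\<^sub>R U = - (y *\<^sub>R V)"
    using assms(2) by (simp add: eq_neg_iff_add_eq_0)
  finally have "U = (- y / x) *\<^sub>R V"
    by simp
  then show ?thesis
    using assms(1) unfolding nonpar_def by blast
qed

lemma vpar_lincomb_imp_proportional:
  assumes "nonpar U V"
    and "vpar (fst x *\<^sub>R U + snd x *\<^sub>R V) (fst a *\<^sub>R U + snd a *\<^sub>R V)"
  shows "\<exists>c. c \<noteq> 0 \<and> x = c *\<^sub>R a"
proof -
  obtain c where c: "fst x *\<^sub>R U + snd x *\<^sub>R V = c *\<^sub>R (fst a *\<^sub>R U + snd a *\<^sub>R V)"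
    and nz: "fst x *\<^sub>R U + snd x *\<^sub>R V \<noteq> 0"
    using assms(2) unfolding vpar_def by blast
  have "(fst x - c * fst a) *\<^sub>R U + (snd x - c * snd a) *\<^sub>R V = 0"
    using c by (simp add: algebra_simps)
  then have "fst x - c * fst a = 0 \<and> snd x - c * snd a = 0"
    by (rule nonpar_lincomb_eq_0[OF assms(1)])
  then have "x = c *\<^sub>R a"
    by (simp add: prod_eq_iff)
  moreover have "c \<noteq> 0"
    using c nz by auto
  ultimately show ?thesis
    by blast
qed

lemma nonpar_lincomb_det_nonzero:
  assumes "nonpar (a1 *\<^sub>R U + a2 *\<^sub>R V) (b1 *\<^sub>R U + b2 *\<^sub>R V)" (is "nonpar ?A ?B")
  shows "a1 * b2 - a2 * b1 \<noteq> 0"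
proof
  assume det: "a1 * b2 - a2 * b1 = 0"
  have "b1 *\<^sub>R ?A = a1 *\<^sub>R ?B" "b2 *\<^sub>R ?A = a2 *\<^sub>R ?B"
    using det by (simp_all add: algebra_simps scaleR_left_diff_distrib[symmetric])
  moreover have "b1 \<noteq> 0 \<or> b2 \<noteq> 0"
    using nonpar_nonzero[OF assms] by auto
  ultimately obtain c where "?A = c *\<^sub>R ?B"
    by (metis nonzero_divide_eq_eq scaleR_scaleR scaleR_one)
  then show False
    using assms unfolding nonpar_def by blast
qed

lemma par_plane_lincomb:
  "par_plane P X \<Longrightarrow> par_plane P Y \<Longrightarrow> par_plane P (a *\<^sub>R X + b *\<^sub>R Y)"
  by (simp add: par_plane_def algebra_simps)

lemma Ck_const: "Ck k (\<lambda>_. c)"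
proof (induction k arbitrary: c)
  case 0
  show ?case
    by simp
next
  case (Suc k)
  show ?case
    by (rule Ck_SucI[OF has_partials_const Suc.IH Suc.IH])
qed

lemma Ck_affine: "Ck k (\<lambda>w. fst w *\<^sub>R a + snd w *\<^sub>R b + c)"
proof (cases k)
  case 0
  then show ?thesis
    by (auto intro!: continuous_intros)
next
  case (Suc m)
  then show ?thesis
    using Ck_SucI[OF has_partials_affine Ck_const Ck_const] by blast
qed

lemma diffeo2_affine:
  fixes a b c :: "real \<times> real"
  assumes "fst a * snd b - snd a * fst b \<noteq> 0"
  shows "diffeo2 (\<lambda>w. fst w *\<^sub>R a + snd w *\<^sub>R b + c)" (is "diffeo2 ?D")
proof -
  define d where "d = fst a * snd b - snd a * fst b"
  define a' where "a' = (snd b / d, - snd a / d)"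
  define b' where "b' = (- fst b / d, fst a / d)"
  define E where "E y = fst y *\<^sub>R a' + snd y *\<^sub>R b' + - (fst c *\<^sub>R a' + snd c *\<^sub>R b')" for y
  have "d \<noteq> 0"
    using assms by (simp add: d_def)
  then have ED: "E (?D w) = w" and DE: "?D (E y) = y" for w y
    by (simp_all add: E_def a'_def b'_def prod_eq_iff field_simps)
      (simp_all add: d_def algebra_simps)
  have "bij ?D"
    by (rule o_bij[of E]) (simp_all add: fun_eq_iff ED DE)
  moreover have "inv ?D = E"
    by (rule inv_equality) (simp_all add: ED DE)
  ultimately show ?thesis
    by (simp add: diffeo2_def smooth2_def E_def[abs_def] Ck_affine)
qed

lemma tangent_congruence_par_plane:
  assumes "tangent_congruence S P"
  shows "par_plane (P p) (pu S p)" and "par_plane (P p) (pv S p)"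
  using assms unfolding tangent_congruence_def by blast+

lemma mink_partials_normal_eq_0:
  assumes "tangent_congruence S P" and "normal_field P N"
  shows "mink (pu S p) (N p) = 0" and "mink (pv S p) (N p) = 0"
  using tangent_congruence_par_plane[OF assms(1)] normal_field_par_plane_iff[OF assms(2)]
  by (simp_all add: mink_commute)

lemma L_conjugate_imp_second_form_eq_0:
  assumes S: "regular_net S" and P: "tangent_congruence S P" and N: "normal_field P N"
    and "L_conjugate S P p (a1 *\<^sub>R pu S p + a2 *\<^sub>R pv S p) (b1 *\<^sub>R pu S p + b2 *\<^sub>R pv S p)"
  shows "second_form S (N p) p (a1, a2) (b1, b2) = 0"
proof -
  obtain D q where "diffeo2 D" and Dq: "D q = p"
    and vpar_u: "vpar (pu (S \<circ> D) q) (a1 *\<^sub>R pu S p + a2 *\<^sub>R pv S p)"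
    and vpar_v: "vpar (pv (S \<circ> D) q) (b1 *\<^sub>R pu S p + b2 *\<^sub>R pv S p)"
    and "par_plane (P p) (pv (pu (S \<circ> D)) q)"
    using assms(4) unfolding L_conjugate_def Let_def by auto
  have S2: "Ck 2 S" and D2: "Ck 2 D"
    using S \<open>diffeo2 D\<close> by (simp_all add: regular_net_def diffeo2_def smooth2_def)
  have UV: "nonpar (pu S p) (pv S p)"
    using S unfolding regular_net_def by blast
  obtain c where "c \<noteq> 0" and c: "pu D q = c *\<^sub>R (a1, a2)"
    using vpar_lincomb_imp_proportional[OF UV, of "pu D q" "(a1, a2)"] vpar_u
    by (auto simp: Ck_2_partials_comp(1)[OF S2 D2] Dq)
  obtain d where "d \<noteq> 0" and d: "pv D q = d *\<^sub>R (b1, b2)"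
    using vpar_lincomb_imp_proportional[OF UV, of "pv D q" "(b1, b2)"] vpar_v
    by (auto simp: Ck_2_partials_comp(2)[OF S2 D2] Dq)
  have "mink (pv (pu (S \<circ> D)) q) (N p) = 0"
    using \<open>par_plane (P p) _\<close> normal_field_par_plane_iff[OF N] by (simp add: mink_commute)
  then have "second_form S (N p) p (pu D q) (pv D q) = 0"
    using mink_mixed_partial_comp[OF S2 D2] mink_partials_normal_eq_0[OF P N] Dq by simp
  then have "c * d * second_form S (N p) p (a1, a2) (b1, b2) = 0"
    by (simp only: c d second_form_scaleR)
  then show ?thesis
    using \<open>c \<noteq> 0\<close> \<open>d \<noteq> 0\<close> by simp
qed

lemma second_form_eq_0_imp_L_conjugate:
  assumes S: "regular_net S" and P: "tangent_congruence S P" and N: "normal_field P N"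
    and AB: "nonpar (a1 *\<^sub>R pu S p + a2 *\<^sub>R pv S p) (b1 *\<^sub>R pu S p + b2 *\<^sub>R pv S p)"
    and "second_form S (N p) p (a1, a2) (b1, b2) = 0"
  shows "L_conjugate S P p (a1 *\<^sub>R pu S p + a2 *\<^sub>R pv S p) (b1 *\<^sub>R pu S p + b2 *\<^sub>R pv S p)"
    (is "L_conjugate S P p ?A ?B")
proof -
  define D where "D w = fst w *\<^sub>R (a1, a2) + snd w *\<^sub>R (b1, b2) + p" for w
  have "diffeo2 D"
    unfolding D_def[abs_def] using nonpar_lincomb_det_nonzero[OF AB] by (intro diffeo2_affine) simp
  have D0: "D 0 = p"
    by (simp add: D_def zero_prod_def)
  have S2: "Ck 2 S"
    using S by (simp add: regular_net_def smooth2_def)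
  have D2: "Ck 2 D"
    unfolding D_def[abs_def] by (rule Ck_affine)
  have D': "pu D = (\<lambda>_. (a1, a2))" "pv D = (\<lambda>_. (b1, b2))"
    unfolding D_def[abs_def] by (rule has_partials_pu_pv[OF has_partials_affine])+
  have u: "pu (S \<circ> D) 0 = ?A" and v: "pv (S \<circ> D) 0 = ?B"
    by (simp_all add: Ck_2_partials_comp[OF S2 D2] D' D0)
  have "mink (pv (pu (S \<circ> D)) 0) (N p) = 0"
    using mink_mixed_partial_comp[OF S2 D2] mink_partials_normal_eq_0[OF P N] assms(5)
    by (simp add: D' D0)
  then have uv: "par_plane (P p) (pv (pu (S \<circ> D)) 0)"
    using normal_field_par_plane_iff[OF N] by (simp add: mink_commute)
  have "par_plane (P p) ?A" "par_plane (P p) ?B"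
    using tangent_congruence_par_plane[OF P] by (simp_all add: par_plane_lincomb)
  moreover have "vpar ?A ?A" "vpar ?B ?B"
    using nonpar_nonzero[OF AB] unfolding vpar_def by (metis scaleR_one)+
  ultimately show ?thesis
    unfolding L_conjugate_def Let_def using AB \<open>diffeo2 D\<close> D0 u v uv
    by (intro conjI exI[of _ D] exI[of _ 0]) auto
qed

theorem theorem1:
  fixes S :: "real \<times> real \<Rightarrow> real^4"
    and P :: "real \<times> real \<Rightarrow> gamma_plane"
    and N :: "real \<times> real \<Rightarrow> real^4"
    and p :: "real \<times> real"
    and a1 a2 b1 b2 :: real
  assumes "regular_net S"
    and "tangent_congruence S P"
    and "normal_field P N"
    and "nonpar (a1 *\<^sub>R pu S p + a2 *\<^sub>R pv S p) (b1 *\<^sub>R pu S p + b2 *\<^sub>R pv S p)"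
  shows "L_conjugate S P p (a1 *\<^sub>R pu S p + a2 *\<^sub>R pv S p) (b1 *\<^sub>R pu S p + b2 *\<^sub>R pv S p)
     \<longleftrightarrow> mink (pu (pu S) p) (N p) * a1 * b1
         + mink (pv (pu S) p) (N p) * (a1 * b2 + a2 * b1)
         + mink (pv (pv S) p) (N p) * a2 * b2 = 0"
  using L_conjugate_imp_second_form_eq_0[OF assms(1-3)]
    second_form_eq_0_imp_L_conjugate[OF assms]
  unfolding second_form_def fst_conv snd_conv by blast

end
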